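(* Let $\alpha\ge0$, $\mu\ge0$. There is a positive constant $M$, independent of $n$, such that for all $g\in C_B[0,\infty)$, $n\in\mathbb{N}$ and $x\in[0,\infty)$, $$|T_n(g;x)-g(x)|\le 2M\left\{\min\!\left(1,\frac{\chi_n(x)}{2}\right)\|g\|_{C_B[0,\infty)}+\omega_2\!\left(g;\sqrt{\frac{\chi_n(x)}{2}}\right)\right\},$$ where $\chi_n(x)=\Delta_1+\Delta_2$ with $\Delta_1=\dfrac{2\alpha x^2}{n}$ and $\Delta_2=\dfrac{1}{n^2}x\left(4x^3\alpha^2+4\alpha x+n\right)+\dfrac{2\mu x}{n}\dfrac{e_\mu(-nx)}{e_\mu(nx)}$.
   Context: $C_B[0,\infty)$ denotes the space of uniformly continuous bounded functions on $[0,\infty)$ with sup norm. The second order modulus of continuity is $\omega_2(f;\delta)=\sup_{0<s\le\delta}\|f(\cdot+2s)-2f(\cdot+s)+f(\cdot)\|_{C_B[0,\infty)}$. For $\mu>-\tfrac12$ define $\gamma_\mu(2k)=\dfrac{2^{2k}k!\,\Gamma(k+\mu+1/2)}{\Gamma(\mu+1/2)}$ and $\gamma_\mu(2k+1)=\dfrac{2^{2k+1}k!\,\Gamma(k+\mu+3/2)}{\Gamma(\mu+1/2)}$, $k\ge0$; $e_\mu(x)=\sum_{k\ge0} x^k/\gamma_\mu(k)$; $\theta_k=0$ if $k$ is even and $\theta_k=1$ if $k$ is odd. Let $h_k^\mu(\xi,\alpha)=\gamma_\mu(k)\sum_{j=0}^{\lfloor k/2\rfloor}\dfrac{\alpha^j\xi^{k-2j}}{j!\,\gamma_\mu(k-2j)}$.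 For $\alpha\ge0,\mu\ge0$, $n\in\mathbb{N}$ and $x\in[0,\infty)$ define $$T_n(f;x)=\frac{1}{e^{\alpha x^2}e_\mu(nx)}\sum_{k=0}^\infty \frac{h_k^\mu(n,\alpha)}{\gamma_\mu(k)}x^k f\!\left(\frac{k+2\mu\theta_k}{n}\right).$$ *)

theory Defs
  imports "HOL-Analysis.Analysis"
begin

definition gamma_mu :: "real \<Rightarrow> nat \<Rightarrow> real" where
  "gamma_mu \<mu> m =
     (if even m then
        2 ^ (2 * (m div 2)) * fact (m div 2) * Gamma (real (m div 2) + \<mu> + 1/2) / Gamma (\<mu> + 1/2)
      else
        2 ^ (2 * (m div 2) + 1) * fact (m div 2) * Gamma (real (m div 2) + \<mu> + 3/2) / Gamma (\<mu> + 1/2))"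

definition e_mu :: "real \<Rightarrow> real \<Rightarrow> real" where
  "e_mu \<mu> x = (\<Sum>k. x ^ k / gamma_mu \<mu> k)"

definition theta :: "nat \<Rightarrow> real" where
  "theta k = (if even k then 0 else 1)"

definition h_mu :: "real \<Rightarrow> nat \<Rightarrow> real \<Rightarrow> real \<Rightarrow> real" where
  "h_mu \<mu> k \<xi> \<alpha> =
     gamma_mu \<mu> k * (\<Sum>j = 0..k div 2. \<alpha> ^ j * \<xi> ^ (k - 2 * j) / (fact j * gamma_mu \<mu> (k - 2 * j)))"

definition T_op :: "real \<Rightarrow> real \<Rightarrow> nat \<Rightarrow> (real \<Rightarrow> real) \<Rightarrow> real \<Rightarrow> real" where
  "T_op \<alpha> \<mu> n f x =
     1 / (exp (\<alpha> * x^2) * e_mu \<mu> (real n * x)) *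
     (\<Sum>k. h_mu \<mu> k (real n) \<alpha> / gamma_mu \<mu> k * x ^ k * f ((real k + 2 * \<mu> * theta k) / real n))"

definition supnorm :: "(real \<Rightarrow> real) \<Rightarrow> real" where
  "supnorm f = (SUP t\<in>{0..}. \<bar>f t\<bar>)"

text \<open>Second order modulus of continuity; for delta <= 0 the supremum is over
  the empty set and is taken to be 0.\<close>
definition omega2 :: "(real \<Rightarrow> real) \<Rightarrow> real \<Rightarrow> real" where
  "omega2 f \<delta> = (if \<delta> \<le> 0 then 0 else
     (SUP s\<in>{0<..\<delta>}. supnorm (\<lambda>t. f (t + 2 * s) - 2 * f (t + s) + f t)))"

definition chi :: "real \<Rightarrow> real \<Rightarrow> nat \<Rightarrow> real \<Rightarrow> real" where
  "chi \<alpha> \<mu> n x =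
     2 * \<alpha> * x^2 / real n
     + (1 / (real n)^2 * x * (4 * x^3 * \<alpha>^2 + 4 * \<alpha> * x + real n)
        + 2 * \<mu> * x / real n * (e_mu \<mu> (- (real n * x)) / e_mu \<mu> (real n * x)))"

end

theory Submission
  imports Defs
begin

text \<open>Expanding the generalized Hermite polynomials, \<open>T\<^sub>n(g; x)\<close> becomes a mean of the values
  \<open>g(t\<^sub>p)\<close> over pairs \<open>p = (j, m)\<close> with positive weights
  \<open>(\<alpha>x\<^sup>2)\<^sup>j/j! \<cdot> (nx)\<^sup>m/\<gamma>\<^sub>\<mu>(m)\<close>, of total mass \<open>exp(\<alpha>x\<^sup>2) e\<^sub>\<mu>(nx)\<close>, at the nodes
  \<open>t\<^sub>p = (2j + m + 2\<mu>\<theta>\<^sub>m)/n\<close>. The recurrence \<open>\<gamma>\<^sub>\<mu>(m+1) = (m + 1 + 2\<mu>\<theta>(m + 1)) \<gamma>\<^sub>\<mu>(m)\<close>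
  gives the first two central moments of this mean, \<open>\<Delta>\<^sub>1\<close> and \<open>\<Delta>\<^sub>2\<close>. The estimate then holds
  for every positive mean with these moments: \<open>g\<close> is replaced by a smoothing \<open>G\<close> with
  \<open>|g - G| \<le> 3\<omega>\<^sub>2(g; h)\<close> and \<open>|G''| \<le> 9\<omega>\<^sub>2(g; h)/h\<^sup>2\<close>, \<open>G\<close> is expanded by Taylor's formula to
  second order, and \<open>h\<^sup>2 = \<chi>\<^sub>n(x)/2\<close>; when \<open>\<chi>\<^sub>n(x) > 2\<close> the trivial bound \<open>2\<parallel>g\<parallel>\<close> suffices.\<close>

section \<open>Dunkl numbers and the Dunkl exponential series\<close>

definition dunkl_num :: "real \<Rightarrow> nat \<Rightarrow> real" where
  "dunkl_num \<mu> k = real k + 2 * \<mu> * theta k"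

lemma dunkl_num_0_right [simp]: "dunkl_num \<mu> 0 = 0"
  by (simp add: dunkl_num_def theta_def)

lemma dunkl_num_0_left [simp]: "dunkl_num 0 k = real k"
  by (simp add: dunkl_num_def)

lemma dunkl_num_nonneg: "\<mu> \<ge> 0 \<Longrightarrow> dunkl_num \<mu> k \<ge> 0"
  by (simp add: dunkl_num_def theta_def)

lemma theta_Suc: "theta (Suc k) = 1 - theta k"
  by (simp add: theta_def)

lemma theta_diff: "2 * j \<le> k \<Longrightarrow> theta (k - 2 * j) = theta k"
  by (simp add: theta_def even_diff_nat)

lemma dunkl_num_Suc: "dunkl_num \<mu> (Suc k) = dunkl_num \<mu> k + 1 + 2 * \<mu> - 4 * \<mu> * theta k"
  by (simp add: dunkl_num_def theta_Suc algebra_simps)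

lemma dunkl_num_Suc_pos: "\<mu> > -1/2 \<Longrightarrow> dunkl_num \<mu> (Suc k) > 0"
  by (simp add: dunkl_num_def theta_def)

lemma gamma_mu_0:
  assumes "\<mu> > -1/2" shows "gamma_mu \<mu> 0 = 1"
proof -
  have "Gamma (\<mu> + 1/2) > 0" using assms by (intro Gamma_real_pos) auto
  thus ?thesis by (simp add: gamma_mu_def)
qed

lemma gamma_mu_Suc:
  assumes "\<mu> > -1/2"
  shows "gamma_mu \<mu> (Suc k) = dunkl_num \<mu> (Suc k) * gamma_mu \<mu> k"
proof (cases "even k")
  case True
  then obtain i where k: "k = 2 * i" by blast
  have "real i + \<mu> + 1/2 \<notin> \<int>\<^sub>\<le>\<^sub>0"
    using assms nonpos_Ints_nonpos by fastforce
  from Gamma_plus1[OF this]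
  have "Gamma (real i + \<mu> + 3/2) = (real i + \<mu> + 1/2) * Gamma (real i + \<mu> + 1/2)"
    by (simp add: add_ac)
  moreover have "Suc (2 * i) div 2 = i" "odd (Suc (2 * i))" by simp_all
  ultimately have "gamma_mu \<mu> (Suc k) =
      2 ^ (2 * i + 1) * fact i * ((real i + \<mu> + 1/2) * Gamma (real i + \<mu> + 1/2)) / Gamma (\<mu> + 1/2)"
    unfolding k gamma_mu_def by simp
  also have "\<dots> = dunkl_num \<mu> (Suc k) * gamma_mu \<mu> k"
    by (simp add: k gamma_mu_def dunkl_num_def theta_def power_add field_split_simps)
  finally show ?thesis .
next
  case False
  then obtain i where k: "k = 2 * i + 1" by (metis oddE)
  have "Suc (2 * i + 1) = 2 * Suc i" by simp
  moreover have "real (Suc i) + \<mu> + 1/2 = real i + \<mu> + 3/2" by simp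
  ultimately show ?thesis
    by (simp only: k gamma_mu_def dunkl_num_def theta_def) (simp add: field_simps power_add)
qed

lemma gamma_mu_pos:
  assumes "\<mu> > -1/2" shows "gamma_mu \<mu> k > 0"
proof (induction k)
  case 0 thus ?case using gamma_mu_0[OF assms] by simp
next
  case (Suc k)
  thus ?case using gamma_mu_Suc[OF assms] dunkl_num_Suc_pos[OF assms] by simp
qed

lemma gamma_mu_0_eq_fact: "gamma_mu 0 k = fact k"
  by (induction k) (simp_all add: gamma_mu_0 gamma_mu_Suc)

lemma fact_le_gamma_mu:
  assumes "\<mu> \<ge> 0" shows "fact k \<le> gamma_mu \<mu> k"
proof (induction k)
  case 0 thus ?case using gamma_mu_0 assms by simp
next
  case (Suc k)
  have "fact (Suc k) = real (Suc k) * fact k" by simp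
  also have "\<dots> \<le> dunkl_num \<mu> (Suc k) * gamma_mu \<mu> k"
    using Suc assms by (intro mult_mono) (auto simp: dunkl_num_def theta_def)
  finally show ?case using gamma_mu_Suc assms by simp
qed

definition dunkl_term :: "real \<Rightarrow> real \<Rightarrow> nat \<Rightarrow> real" where
  "dunkl_term \<mu> z k = z ^ k / gamma_mu \<mu> k"

lemma dunkl_term_nonneg: "\<mu> > -1/2 \<Longrightarrow> z \<ge> 0 \<Longrightarrow> dunkl_term \<mu> z k \<ge> 0"
  using gamma_mu_pos[of \<mu> k] by (simp add: dunkl_term_def)

lemma dunkl_term_sums:
  assumes "\<mu> \<ge> 0" shows "dunkl_term \<mu> z sums e_mu \<mu> z"
proof -
  have "summable (dunkl_term \<mu> z)"
  proof (rule summable_comparison_test')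
    show "summable (\<lambda>k. inverse (fact k) * \<bar>z\<bar> ^ k)" by (rule summable_exp)
    fix k :: nat
    have "norm (dunkl_term \<mu> z k) = \<bar>z\<bar> ^ k / gamma_mu \<mu> k"
      using gamma_mu_pos[of \<mu> k] assms by (simp add: dunkl_term_def power_abs)
    also have "\<dots> \<le> \<bar>z\<bar> ^ k / fact k"
      using fact_le_gamma_mu[OF assms] gamma_mu_pos[of \<mu> k] assms
      by (intro divide_left_mono) (auto intro: mult_pos_pos)
    finally show "norm (dunkl_term \<mu> z k) \<le> inverse (fact k) * \<bar>z\<bar> ^ k"
      by (simp add: field_simps)
  qed
  moreover have "e_mu \<mu> z = suminf (dunkl_term \<mu> z)"
    by (simp add: e_mu_def dunkl_term_def[abs_def])
  ultimately show ?thesis by (simp add: summable_sums)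
qed

lemma e_mu_0: "e_mu 0 z = exp z"
proof -
  have "dunkl_term 0 z = (\<lambda>k. z ^ k /\<^sub>R fact k)"
    by (simp add: fun_eq_iff dunkl_term_def gamma_mu_0_eq_fact divide_inverse mult.commute)
  with dunkl_term_sums[of 0 z] exp_converges[of z] show ?thesis
    using sums_unique2 by simp
qed

lemma e_mu_ge_1:
  assumes "\<mu> \<ge> 0" and "z \<ge> 0" shows "e_mu \<mu> z \<ge> 1"
proof -
  have "sum (dunkl_term \<mu> z) {0} \<le> suminf (dunkl_term \<mu> z)"
    using dunkl_term_sums assms dunkl_term_nonneg
    by (intro sum_le_suminf) (auto simp: sums_iff)
  thus ?thesis
    using assms gamma_mu_0 dunkl_term_sums[OF assms(1)] by (simp add: dunkl_term_def sums_iff)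
qed

lemma dunkl_num_mult_term_Suc:
  assumes "\<mu> > -1/2"
  shows "dunkl_num \<mu> (Suc k) * dunkl_term \<mu> z (Suc k) = z * dunkl_term \<mu> z k"
  using gamma_mu_Suc[OF assms, of k] gamma_mu_pos[OF assms, of k] dunkl_num_Suc_pos[OF assms, of k]
  by (simp add: dunkl_term_def field_simps)

lemma dunkl_moment1_sums:
  assumes "\<mu> \<ge> 0" shows "(\<lambda>k. dunkl_num \<mu> k * dunkl_term \<mu> z k) sums (z * e_mu \<mu> z)"
proof -
  have "(\<lambda>k. dunkl_num \<mu> (Suc k) * dunkl_term \<mu> z (Suc k)) sums (z * e_mu \<mu> z)"
    using assms dunkl_num_mult_term_Suc by (simp add: sums_mult dunkl_term_sums)
  thus ?thesis by (subst (asm) sums_Suc_iff) simp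
qed

lemma dunkl_moment2_sums:
  assumes "\<mu> \<ge> 0"
  shows "(\<lambda>k. (dunkl_num \<mu> k)\<^sup>2 * dunkl_term \<mu> z k) sums
           (z * (z * e_mu \<mu> z + e_mu \<mu> z + 2 * \<mu> * e_mu \<mu> (-z)))"
proof -
  have recurrence: "(dunkl_num \<mu> (Suc k))\<^sup>2 * dunkl_term \<mu> z (Suc k)
      = z * (dunkl_num \<mu> k * dunkl_term \<mu> z k) + z * (1 + 2 * \<mu>) * dunkl_term \<mu> z k
        - 2 * \<mu> * z * (dunkl_term \<mu> z k - dunkl_term \<mu> (-z) k)" for k
  proof -
    have "(dunkl_num \<mu> (Suc k))\<^sup>2 * dunkl_term \<mu> z (Suc k)
        = dunkl_num \<mu> (Suc k) * (z * dunkl_term \<mu> z k)"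
      using dunkl_num_mult_term_Suc[of \<mu> k z] assms by (simp add: power2_eq_square)
    also have "\<dots> = z * (dunkl_num \<mu> k * dunkl_term \<mu> z k) + z * (1 + 2 * \<mu>) * dunkl_term \<mu> z k
        - 2 * \<mu> * z * (dunkl_term \<mu> z k - dunkl_term \<mu> (-z) k)"
      by (cases "even k")
        (simp_all add: dunkl_num_Suc theta_def dunkl_term_def algebra_simps add_divide_distrib)
    finally show ?thesis .
  qed
  have "(\<lambda>k. (dunkl_num \<mu> (Suc k))\<^sup>2 * dunkl_term \<mu> z (Suc k)) sums
      (z * (z * e_mu \<mu> z) + z * (1 + 2 * \<mu>) * e_mu \<mu> z - 2 * \<mu> * z * (e_mu \<mu> z - e_mu \<mu> (-z)))"
    unfolding recurrence
    by (intro sums_diff sums_add sums_mult dunkl_moment1_sums dunkl_term_sums assms)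
  thus ?thesis by (subst (asm) sums_Suc_iff) (simp add: algebra_simps)
qed

lemma dunkl_term_has_sum:
  "\<mu> \<ge> 0 \<Longrightarrow> z \<ge> 0 \<Longrightarrow> (dunkl_term \<mu> z has_sum e_mu \<mu> z) UNIV"
  by (intro sums_nonneg_imp_has_sum dunkl_term_sums dunkl_term_nonneg) auto

lemma dunkl_moment1_has_sum:
  "\<mu> \<ge> 0 \<Longrightarrow> z \<ge> 0 \<Longrightarrow> ((\<lambda>k. dunkl_num \<mu> k * dunkl_term \<mu> z k) has_sum (z * e_mu \<mu> z)) UNIV"
  by (intro sums_nonneg_imp_has_sum dunkl_moment1_sums mult_nonneg_nonneg dunkl_num_nonneg
      dunkl_term_nonneg) auto

lemma dunkl_moment2_has_sum:
  "\<mu> \<ge> 0 \<Longrightarrow> z \<ge> 0 \<Longrightarrow> ((\<lambda>k. (dunkl_num \<mu> k)\<^sup>2 * dunkl_term \<mu> z k) has_sum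
     (z * (z * e_mu \<mu> z + e_mu \<mu> z + 2 * \<mu> * e_mu \<mu> (-z)))) UNIV"
  by (intro sums_nonneg_imp_has_sum dunkl_moment2_sums mult_nonneg_nonneg dunkl_term_nonneg) auto

section \<open>The operator as a positive mean over pairs\<close>

lemma has_sum_product_nonneg:
  fixes u :: "'a \<Rightarrow> real" and v :: "'b \<Rightarrow> real"
  assumes u: "(u has_sum U) UNIV" and v: "(v has_sum V) UNIV"
    and u_nonneg: "\<And>i. u i \<ge> 0" and v_nonneg: "\<And>j. v j \<ge> 0"
  shows "((\<lambda>(i, j). u i * v j) has_sum (U * V)) UNIV"
proof -
  have "(\<lambda>(i, j). u i * v j) summable_on UNIV"
  proof (rule nonneg_bdd_above_summable_on)
    show "0 \<le> (case p of (i, j) \<Rightarrow> u i * v j)" for p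
      using u_nonneg v_nonneg by (cases p) simp
    show "bdd_above (sum (\<lambda>(i, j). u i * v j) ` {F. F \<subseteq> UNIV \<and> finite F})"
    proof (rule bdd_aboveI2)
      fix F :: "('a \<times> 'b) set" assume "F \<in> {F. F \<subseteq> UNIV \<and> finite F}"
      hence F: "finite F" by simp
      have "sum (\<lambda>(i, j). u i * v j) F \<le> sum (\<lambda>(i, j). u i * v j) (fst ` F \<times> snd ` F)"
        using F u_nonneg v_nonneg by (intro sum_mono2) (auto intro: mult_nonneg_nonneg, force+)
      also have "\<dots> = sum u (fst ` F) * sum v (snd ` F)"
        by (simp add: sum_product sum.cartesian_product)
      also have "\<dots> \<le> U * V"
        using finite_sum_le_has_sum[OF u, of "fst ` F"] finite_sum_le_has_sum[OF v, of "snd ` F"]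
          F u_nonneg v_nonneg has_sum_nonneg[OF u] by (intro mult_mono) (auto intro: sum_nonneg)
      finally show "sum (\<lambda>(i, j). u i * v j) F \<le> U * V" .
    qed
  qed
  hence "((\<lambda>(i, j). u i * v j) has_sum (U * V)) (Sigma UNIV (\<lambda>_. UNIV))"
    by (intro has_sum_SigmaI[OF _ has_sum_cmult_left[OF u]]) (auto intro: has_sum_cmult_right[OF v])
  thus ?thesis by simp
qed

lemma has_sum_diff:
  fixes f g :: "'a \<Rightarrow> 'b::topological_ab_group_add"
  assumes "(f has_sum a) A" and "(g has_sum b) A"
  shows "((\<lambda>x. f x - g x) has_sum (a - b)) A"
proof -
  have "((\<lambda>x. - g x) has_sum - b) A" using assms(2) by (simp add: has_sum_uminus)
  from has_sum_add[OF assms(1) this] show ?thesis by simp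
qed

text \<open>The \<open>k\<close>-th summand of \<open>T\<^sub>n(g; x)\<close> splits over the pairs \<open>(j, m)\<close> with \<open>2j + m = k\<close>, which
  all share the node \<open>(k + 2\<mu>\<theta>\<^sub>k)/n\<close> because \<open>\<theta>\<^sub>m = \<theta>\<^sub>k\<close>; the factor \<open>(\<alpha>x\<^sup>2)\<^sup>j/j!\<close> is written
  as the Dunkl term for \<open>\<mu> = 0\<close>, since \<open>\<gamma>\<^sub>0(j) = j!\<close>.\<close>

definition T_weight :: "real \<Rightarrow> real \<Rightarrow> real \<Rightarrow> nat \<times> nat \<Rightarrow> real" where
  "T_weight \<mu> y z p = dunkl_term 0 y (fst p) * dunkl_term \<mu> z (snd p)"

definition T_node :: "real \<Rightarrow> nat \<Rightarrow> nat \<times> nat \<Rightarrow> real" where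
  "T_node \<mu> n p = (2 * real (fst p) + dunkl_num \<mu> (snd p)) / real n"

lemma T_weight_nonneg: "\<mu> \<ge> 0 \<Longrightarrow> y \<ge> 0 \<Longrightarrow> z \<ge> 0 \<Longrightarrow> T_weight \<mu> y z p \<ge> 0"
  by (simp add: T_weight_def dunkl_term_nonneg)

lemma T_node_nonneg: "\<mu> \<ge> 0 \<Longrightarrow> T_node \<mu> n p \<ge> 0"
  by (simp add: T_node_def dunkl_num_nonneg)

context
  fixes \<mu> y z :: real
  assumes \<mu>: "\<mu> \<ge> 0" and y: "y \<ge> 0" and z: "z \<ge> 0"
begin

private lemma exp_moments:
  "(dunkl_term 0 y has_sum exp y) UNIV"
  "((\<lambda>j. real j * dunkl_term 0 y j) has_sum (y * exp y)) UNIV"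
  "((\<lambda>j. (real j)\<^sup>2 * dunkl_term 0 y j) has_sum ((y\<^sup>2 + y) * exp y)) UNIV"
  using dunkl_term_has_sum[of 0 y] dunkl_moment1_has_sum[of 0 y] dunkl_moment2_has_sum[of 0 y] y
  by (simp_all add: e_mu_0 power2_eq_square algebra_simps)

lemma T_weight_has_sum: "(T_weight \<mu> y z has_sum (exp y * e_mu \<mu> z)) UNIV"
proof -
  have "((\<lambda>(j, m). dunkl_term 0 y j * dunkl_term \<mu> z m) has_sum (exp y * e_mu \<mu> z)) UNIV"
    using y z \<mu>
    by (intro has_sum_product_nonneg exp_moments dunkl_term_has_sum dunkl_term_nonneg) simp_all
  thus ?thesis by (simp add: T_weight_def[abs_def] split_def)
qed

lemma T_weight_node_has_sum:
  "((\<lambda>p. T_weight \<mu> y z p * T_node \<mu> n p) has_sum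
     (exp y * e_mu \<mu> z * ((2 * y + z) / real n))) UNIV"
proof -
  have "((\<lambda>(j, m). (real j * dunkl_term 0 y j) * dunkl_term \<mu> z m) has_sum (y * exp y * e_mu \<mu> z)) UNIV"
    "((\<lambda>(j, m). dunkl_term 0 y j * (dunkl_num \<mu> m * dunkl_term \<mu> z m)) has_sum (exp y * (z * e_mu \<mu> z))) UNIV"
    using y z \<mu> by (intro has_sum_product_nonneg exp_moments dunkl_term_has_sum dunkl_moment1_has_sum
        mult_nonneg_nonneg dunkl_term_nonneg dunkl_num_nonneg; simp)+
  from has_sum_cmult_left[OF has_sum_add[OF has_sum_cmult_right[OF this(1), of 2] this(2)], of "1 / real n"]
  show ?thesis
    by (simp add: T_weight_def T_node_def case_prod_beta field_simps)
qed

lemma T_weight_node_sq_has_sum: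
  "((\<lambda>p. T_weight \<mu> y z p * (T_node \<mu> n p)\<^sup>2) has_sum
     (exp y * (4 * (y\<^sup>2 + y) * e_mu \<mu> z + 4 * y * z * e_mu \<mu> z
        + z * (z * e_mu \<mu> z + e_mu \<mu> z + 2 * \<mu> * e_mu \<mu> (-z))) / (real n)\<^sup>2)) UNIV"
proof -
  have "((\<lambda>(j, m). ((real j)\<^sup>2 * dunkl_term 0 y j) * dunkl_term \<mu> z m) has_sum
          ((y\<^sup>2 + y) * exp y * e_mu \<mu> z)) UNIV"
    "((\<lambda>(j, m). (real j * dunkl_term 0 y j) * (dunkl_num \<mu> m * dunkl_term \<mu> z m)) has_sum
          (y * exp y * (z * e_mu \<mu> z))) UNIV"
    "((\<lambda>(j, m). dunkl_term 0 y j * ((dunkl_num \<mu> m)\<^sup>2 * dunkl_term \<mu> z m)) has_sum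
          (exp y * (z * (z * e_mu \<mu> z + e_mu \<mu> z + 2 * \<mu> * e_mu \<mu> (-z))))) UNIV"
    using y z \<mu> by (intro has_sum_product_nonneg exp_moments dunkl_term_has_sum dunkl_moment1_has_sum
        dunkl_moment2_has_sum mult_nonneg_nonneg dunkl_term_nonneg dunkl_num_nonneg; simp)+
  from has_sum_cmult_left[OF has_sum_add[OF has_sum_add[OF has_sum_cmult_right[OF this(1), of 4]
      has_sum_cmult_right[OF this(2), of 4]] this(3)], of "1 / (real n)\<^sup>2"]
  show ?thesis
    by (simp add: T_weight_def T_node_def case_prod_beta field_simps power2_eq_square)
qed

end

lemma T_central_moments:
  assumes \<mu>: "\<mu> \<ge> 0" and \<alpha>: "\<alpha> \<ge> 0" and x: "x \<ge> 0" and n: "n \<ge> 1"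
  defines "y \<equiv> \<alpha> * x\<^sup>2" and "z \<equiv> real n * x"
  shows "((\<lambda>p. T_weight \<mu> y z p * (T_node \<mu> n p - x)) has_sum
           (exp y * e_mu \<mu> z) * (2 * \<alpha> * x\<^sup>2 / real n)) UNIV"
    and "((\<lambda>p. T_weight \<mu> y z p * (T_node \<mu> n p - x)\<^sup>2) has_sum
           (exp y * e_mu \<mu> z) * (chi \<alpha> \<mu> n x - 2 * \<alpha> * x\<^sup>2 / real n)) UNIV"
proof -
  have y: "y \<ge> 0" and z: "z \<ge> 0" using \<alpha> x by (auto simp: y_def z_def)
  have "real n > 0" and "e_mu \<mu> z \<ge> 1" using n e_mu_ge_1[OF \<mu> z] by auto
  note W0 = T_weight_has_sum[OF \<mu> y z]
    and W1 = T_weight_node_has_sum[OF \<mu> y z, of n]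
    and W2 = T_weight_node_sq_has_sum[OF \<mu> y z, of n]
  have "((\<lambda>p. T_weight \<mu> y z p * T_node \<mu> n p - x * T_weight \<mu> y z p) has_sum
      (exp y * e_mu \<mu> z * ((2 * y + z) / real n) - x * (exp y * e_mu \<mu> z))) UNIV"
    by (intro has_sum_diff has_sum_cmult_right W0 W1)
  moreover have "exp y * e_mu \<mu> z * ((2 * y + z) / real n) - x * (exp y * e_mu \<mu> z)
      = (exp y * e_mu \<mu> z) * (2 * \<alpha> * x\<^sup>2 / real n)"
    using \<open>real n > 0\<close> by (simp add: y_def z_def field_simps)
  ultimately show "((\<lambda>p. T_weight \<mu> y z p * (T_node \<mu> n p - x)) has_sum
           (exp y * e_mu \<mu> z) * (2 * \<alpha> * x\<^sup>2 / real n)) UNIV"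
    by (simp add: algebra_simps)
  have "((\<lambda>p. T_weight \<mu> y z p * (T_node \<mu> n p)\<^sup>2 - (2 * x) * (T_weight \<mu> y z p * T_node \<mu> n p)
        + x\<^sup>2 * T_weight \<mu> y z p) has_sum
      (exp y * (4 * (y\<^sup>2 + y) * e_mu \<mu> z + 4 * y * z * e_mu \<mu> z
        + z * (z * e_mu \<mu> z + e_mu \<mu> z + 2 * \<mu> * e_mu \<mu> (-z))) / (real n)\<^sup>2
       - (2 * x) * (exp y * e_mu \<mu> z * ((2 * y + z) / real n)) + x\<^sup>2 * (exp y * e_mu \<mu> z))) UNIV"
    by (intro has_sum_add has_sum_diff has_sum_cmult_right W0 W1 W2)
  moreover have "(\<lambda>p. T_weight \<mu> y z p * (T_node \<mu> n p)\<^sup>2 - (2 * x) * (T_weight \<mu> y z p * T_node \<mu> n p)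
        + x\<^sup>2 * T_weight \<mu> y z p) = (\<lambda>p. T_weight \<mu> y z p * (T_node \<mu> n p - x)\<^sup>2)"
    by (simp add: fun_eq_iff algebra_simps power2_eq_square)
  moreover have "exp y * (4 * (y\<^sup>2 + y) * e_mu \<mu> z + 4 * y * z * e_mu \<mu> z
        + z * (z * e_mu \<mu> z + e_mu \<mu> z + 2 * \<mu> * e_mu \<mu> (-z))) / (real n)\<^sup>2
       - (2 * x) * (exp y * e_mu \<mu> z * ((2 * y + z) / real n)) + x\<^sup>2 * (exp y * e_mu \<mu> z)
      = (exp y * e_mu \<mu> z) * (chi \<alpha> \<mu> n x - 2 * \<alpha> * x\<^sup>2 / real n)"
    using \<open>real n > 0\<close> \<open>e_mu \<mu> z \<ge> 1\<close> unfolding chi_def y_def z_def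
    by (simp add: field_simps power2_eq_square power3_eq_cube)
  ultimately show "((\<lambda>p. T_weight \<mu> y z p * (T_node \<mu> n p - x)\<^sup>2) has_sum
           (exp y * e_mu \<mu> z) * (chi \<alpha> \<mu> n x - 2 * \<alpha> * x\<^sup>2 / real n)) UNIV"
    by simp
qed

lemma T_op_summand_eq:
  assumes "\<mu> \<ge> 0"
  shows "h_mu \<mu> k (real n) \<alpha> / gamma_mu \<mu> k * x ^ k * g ((real k + 2 * \<mu> * theta k) / real n)
    = (\<Sum>j = 0..k div 2. T_weight \<mu> (\<alpha> * x\<^sup>2) (real n * x) (j, k - 2 * j)
                          * g (T_node \<mu> n (j, k - 2 * j)))"
proof -
  have "gamma_mu \<mu> k \<noteq> 0" using gamma_mu_pos[of \<mu> k] assms by simp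
  hence "h_mu \<mu> k (real n) \<alpha> / gamma_mu \<mu> k * x ^ k * g ((real k + 2 * \<mu> * theta k) / real n)
      = (\<Sum>j = 0..k div 2. \<alpha> ^ j * real n ^ (k - 2 * j) / (fact j * gamma_mu \<mu> (k - 2 * j))
          * x ^ k * g ((real k + 2 * \<mu> * theta k) / real n))"
    unfolding h_mu_def by (simp add: sum_distrib_right)
  also have "\<dots> = (\<Sum>j = 0..k div 2. T_weight \<mu> (\<alpha> * x\<^sup>2) (real n * x) (j, k - 2 * j)
                                       * g (T_node \<mu> n (j, k - 2 * j)))"
  proof (rule sum.cong[OF refl])
    fix j assume "j \<in> {0..k div 2}"
    hence jk: "2 * j \<le> k" by auto
    have "x ^ k = (x\<^sup>2) ^ j * x ^ (k - 2 * j)"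
      using jk by (simp add: power_mult[symmetric] power_add[symmetric])
    moreover have "T_node \<mu> n (j, k - 2 * j) = (real k + 2 * \<mu> * theta k) / real n"
      using jk by (simp add: T_node_def dunkl_num_def theta_diff of_nat_diff)
    ultimately show "\<alpha> ^ j * real n ^ (k - 2 * j) / (fact j * gamma_mu \<mu> (k - 2 * j))
          * x ^ k * g ((real k + 2 * \<mu> * theta k) / real n)
        = T_weight \<mu> (\<alpha> * x\<^sup>2) (real n * x) (j, k - 2 * j) * g (T_node \<mu> n (j, k - 2 * j))"
      by (simp add: T_weight_def dunkl_term_def gamma_mu_0_eq_fact power_mult_distrib field_simps)
  qed
  finally show ?thesis .
qed

lemma T_op_has_sum_pairs:
  fixes n :: nat and g :: "real \<Rightarrow> real"
  assumes \<mu>: "\<mu> \<ge> 0" and \<alpha>: "\<alpha> \<ge> 0" and x: "x \<ge> 0"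
    and bounded: "\<And>t. t \<ge> 0 \<Longrightarrow> \<bar>g t\<bar> \<le> B"
  defines "y \<equiv> \<alpha> * x\<^sup>2" and "z \<equiv> real n * x"
  shows "((\<lambda>p. T_weight \<mu> y z p * g (T_node \<mu> n p)) has_sum
           (exp y * e_mu \<mu> z * T_op \<alpha> \<mu> n g x)) UNIV"
proof -
  have y: "y \<ge> 0" and z: "z \<ge> 0" using \<alpha> x by (auto simp: y_def z_def)
  define F where "F p = T_weight \<mu> y z p * g (T_node \<mu> n p)" for p
  have "(\<lambda>p. norm (F p)) summable_on UNIV"
  proof (rule Infinite_Sum.abs_summable_on_comparison_test')
    show "(\<lambda>p. B * T_weight \<mu> y z p) summable_on UNIV"
      using has_sum_cmult_right[OF T_weight_has_sum[OF \<mu> y z]] by (auto simp: summable_on_def)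
    show "norm (F p) \<le> B * T_weight \<mu> y z p" for p
      using bounded[OF T_node_nonneg[OF \<mu>]] T_weight_nonneg[OF \<mu> y z, of p]
      by (simp add: F_def abs_mult mult.commute[of B] mult_left_mono)
  qed
  then obtain S where S: "(F has_sum S) UNIV"
    using abs_summable_summable summable_on_def by blast
  have "((\<lambda>q. F (snd q, fst q - 2 * snd q)) has_sum S) (Sigma UNIV (\<lambda>k. {0..k div 2}))"
    using S by (subst has_sum_reindex_bij_witness[where i = "\<lambda>(j, m). (2 * j + m, j)"
        and j = "\<lambda>q. (snd q, fst q - 2 * snd q)"]) auto
  hence "((\<lambda>k. \<Sum>j = 0..k div 2. F (j, k - 2 * j)) has_sum S) UNIV"
    by (rule has_sum_Sigma') (auto intro: has_sum_finiteI)
  hence "(\<lambda>k. \<Sum>j = 0..k div 2. F (j, k - 2 * j)) sums S" by (rule has_sum_imp_sums)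
  hence "T_op \<alpha> \<mu> n g x = S / (exp y * e_mu \<mu> z)"
    unfolding T_op_def F_def y_def z_def T_op_summand_eq[OF \<mu>] by (simp add: sums_iff)
  thus ?thesis using S e_mu_ge_1[OF \<mu> z] by (simp add: F_def[abs_def])
qed

section \<open>Second differences and smoothing\<close>

definition diff2 :: "(real \<Rightarrow> real) \<Rightarrow> real \<Rightarrow> real \<Rightarrow> real" where
  "diff2 f s t = f (t + 2 * s) - 2 * f (t + s) + f t"

lemma supnorm_ge:
  assumes "bounded (g ` {0..})" and "t \<ge> 0"
  shows "\<bar>g t\<bar> \<le> supnorm g"
proof -
  obtain B where "\<And>s. s \<ge> 0 \<Longrightarrow> \<bar>g s\<bar> \<le> B" using assms(1) by (auto simp: bounded_iff)
  hence "bdd_above ((\<lambda>s. \<bar>g s\<bar>) ` {0..})" by (auto intro!: bdd_aboveI2)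
  thus ?thesis unfolding supnorm_def using assms(2) by (intro cSUP_upper) auto
qed

lemma supnorm_nonneg: "bounded (g ` {0..}) \<Longrightarrow> supnorm g \<ge> 0"
  using supnorm_ge[of g 0] by force

lemma abs_diff2_le_omega2:
  assumes bounded: "bounded (g ` {0..})" and "t \<ge> 0" "0 < s" "s \<le> h"
  shows "\<bar>diff2 g s t\<bar> \<le> omega2 g h"
proof -
  let ?D = "\<lambda>s. supnorm (diff2 g s)"
  have diff2_le: "\<bar>diff2 g s t\<bar> \<le> 4 * supnorm g" if "t \<ge> 0" "s \<ge> 0" for s t
    using supnorm_ge[OF bounded, of t] supnorm_ge[OF bounded, of "t + s"]
      supnorm_ge[OF bounded, of "t + 2 * s"] that
    by (simp add: diff2_def)
  have "bounded (diff2 g s ` {0..})"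
    unfolding bounded_iff using diff2_le \<open>0 < s\<close> by (intro exI[of _ "4 * supnorm g"]) auto
  hence "\<bar>diff2 g s t\<bar> \<le> ?D s" using supnorm_ge \<open>t \<ge> 0\<close> by blast
  also have "?D s \<le> (SUP s\<in>{0<..h}. ?D s)"
    using assms diff2_le
    by (intro cSUP_upper bdd_aboveI2[where M = "4 * supnorm g"])
       (auto simp: supnorm_def intro!: cSUP_least)
  also have "\<dots> = omega2 g h"
    using assms by (simp add: omega2_def diff2_def[abs_def])
  finally show ?thesis .
qed

lemma omega2_nonneg: "bounded (g ` {0..}) \<Longrightarrow> omega2 g h \<ge> 0"
  using abs_diff2_le_omega2[of g 0 h h] by (cases "h \<le> 0") (auto simp: omega2_def)

lemma taylor2_remainder_bound:
  fixes F F1 F2 :: "real \<Rightarrow> real"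
  assumes F: "\<And>u. a \<le> u \<Longrightarrow> u \<le> b \<Longrightarrow> (F has_real_derivative F1 u) (at u)"
    and F1: "\<And>u. a \<le> u \<Longrightarrow> u \<le> b \<Longrightarrow> (F1 has_real_derivative F2 u) (at u)"
    and F2: "\<And>u. a \<le> u \<Longrightarrow> u \<le> b \<Longrightarrow> \<bar>F2 u\<bar> \<le> K"
    and "a \<le> x" "x \<le> b" "a \<le> t" "t \<le> b"
  shows "\<bar>F t - F x - F1 x * (t - x)\<bar> \<le> K / 2 * (t - x)\<^sup>2"
proof (cases "t = x")
  case False
  define D where "D m = (if m = 0 then F else if m = 1 then F1 else F2)" for m :: nat
  have "\<forall>m u. m < 2 \<and> a \<le> u \<and> u \<le> b \<longrightarrow> (D m has_real_derivative D (Suc m) u) (at u)"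
    using F F1 by (auto simp: D_def less_2_cases_iff)
  from Taylor[where n = 2 and diff = D and c = x and x = t, OF _ _ this] False assms(4-)
  obtain \<xi> where \<xi>: "if t < x then t < \<xi> \<and> \<xi> < x else x < \<xi> \<and> \<xi> < t"
    and "F t = F x + F1 x * (t - x) + F2 \<xi> / 2 * (t - x)\<^sup>2"
    by (auto simp: D_def numeral_2_eq_2)
  moreover have "a \<le> \<xi>" "\<xi> \<le> b" using \<xi> assms(4-) by (auto split: if_splits)
  ultimately show ?thesis
    using F2[of \<xi>] by (simp add: abs_mult mult_right_mono)
qed simp

lemma continuous_on_UNIV_antiderivative:
  fixes f :: "real \<Rightarrow> real"
  assumes "continuous_on UNIV f"
  obtains F where "\<And>x. (F has_real_derivative f x) (at x)"
proof -
  from einterval_antiderivative[of "-\<infinity>" "\<infinity>" f] assms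
  obtain F where "\<forall>x. (F has_vector_derivative f x) (at x)"
    by (auto simp: continuous_on_eq_continuous_at)
  thus ?thesis using that[of F] by (simp add: has_real_derivative_iff_has_vector_derivative)
qed

text \<open>For a second antiderivative \<open>F\<close> of \<open>f\<close>, \<open>M\<^sub>s = diff2 F s x / s\<^sup>2\<close> is the mean of \<open>f\<close> against
  the hat function on \<open>[x, x + 2s]\<close>, and \<open>steklov2 F a x = 2M\<^sub>a - M\<^sub>2\<^sub>a\<close> is the Richardson
  combination cancelling the first-order term of \<open>M\<^sub>s - f x\<close>.\<close>

definition steklov2 :: "(real \<Rightarrow> real) \<Rightarrow> real \<Rightarrow> real \<Rightarrow> real" where
  "steklov2 F a x = (2 * diff2 F a x - diff2 F (2 * a) x / 4) / a\<^sup>2"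

lemma steklov2_has_derivative:
  assumes F: "\<And>u. (F has_real_derivative f u) (at u)"
  shows "(steklov2 F a has_real_derivative steklov2 f a x) (at x)"
proof -
  have shift: "((\<lambda>x. F (x + c)) has_real_derivative f (x + c)) (at x)" for c
    using F DERIV_shift by blast
  show ?thesis
    unfolding steklov2_def[abs_def] diff2_def
    by (intro DERIV_cdivide DERIV_diff DERIV_add DERIV_cmult shift F)
qed

lemma abs_steklov2_le:
  assumes "\<bar>diff2 f a x\<bar> \<le> W" and "\<bar>diff2 f (2 * a) x\<bar> \<le> W"
  shows "\<bar>steklov2 f a x\<bar> \<le> 9 * W / (4 * a\<^sup>2)"
proof -
  have "\<bar>2 * diff2 f a x - diff2 f (2 * a) x / 4\<bar> \<le> 9 * W / 4"
    using assms by linarith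
  hence "\<bar>2 * diff2 f a x - diff2 f (2 * a) x / 4\<bar> / a\<^sup>2 \<le> (9 * W / 4) / a\<^sup>2"
    by (rule divide_right_mono) simp
  thus ?thesis by (simp add: steklov2_def abs_divide)
qed

lemma steklov2_approx:
  assumes Psi: "\<And>u. (Psi has_real_derivative Phi u) (at u)"
    and Phi: "\<And>u. (Phi has_real_derivative f u) (at u)"
    and "a > 0"
    and diff2_le: "\<And>s. 0 < s \<Longrightarrow> s \<le> 2 * a \<Longrightarrow> \<bar>diff2 f s x\<bar> \<le> W"
  shows "\<bar>f x - steklov2 Psi a x\<bar> \<le> 3 * W"
proof -
  txt \<open>\<open>Q'' w = - diff2 f w x\<close> and \<open>a\<^sup>2 (steklov2 Psi a x - f x) = Q (2a) - 2 Q a\<close>.\<close>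
  define Q where "Q w = 2 * (Psi (x + w) - Psi x - w * Phi x)
    - (Psi (x + 2 * w) - Psi x - 2 * w * Phi x) / 4 - f x * w\<^sup>2 / 2" for w
  define Q1 where "Q1 w = 2 * (Phi (x + w) - Phi x) - (Phi (x + 2 * w) - Phi x) / 2 - f x * w" for w
  have scaled: "((\<lambda>w. F (x + c * w)) has_real_derivative F' (x + c * w) * c) (at w)"
    if "\<And>u. (F has_real_derivative F' u) (at u)" for F F' c w
    by (rule DERIV_chain2[OF that]) (auto intro!: derivative_eq_intros)
  note Psi1 = scaled[OF Psi, of 1, simplified] and Psi2 = scaled[OF Psi, of 2]
    and Phi1 = scaled[OF Phi, of 1, simplified] and Phi2 = scaled[OF Phi, of 2]
  have "(Q has_real_derivative Q1 w) (at w)" for w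
    unfolding Q_def[abs_def] Q1_def
    by (auto intro!: derivative_eq_intros Psi1 Psi2)
  moreover have "(Q1 has_real_derivative - diff2 f w x) (at w)" for w
    unfolding Q1_def[abs_def] diff2_def
    by (auto intro!: derivative_eq_intros Phi1 Phi2)
  moreover have "\<bar>- diff2 f u x\<bar> \<le> W" if "0 \<le> u" "u \<le> 2 * a" for u
    using diff2_le[of u] diff2_le[of a] that \<open>a > 0\<close> by (cases "u = 0") (auto simp: diff2_def)
  ultimately have Q_le: "\<bar>Q w\<bar> \<le> W / 2 * w\<^sup>2" if "0 \<le> w" "w \<le> 2 * a" for w
    using taylor2_remainder_bound[of 0 "2 * a" Q Q1 "\<lambda>w. - diff2 f w x" W 0 w] that \<open>a > 0\<close>
    by (simp add: Q_def Q1_def)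
  have "f x - steklov2 Psi a x = - (Q (2 * a) - 2 * Q a) / a\<^sup>2"
    using \<open>a > 0\<close> by (simp add: steklov2_def diff2_def Q_def field_simps power2_eq_square)
  also have "\<bar>\<dots>\<bar> \<le> 3 * W"
    using Q_le[of "2 * a"] Q_le[of a] \<open>a > 0\<close>
    by (simp add: abs_divide divide_le_eq power2_eq_square)
  finally show ?thesis .
qed

lemma second_order_smoothing:
  fixes g :: "real \<Rightarrow> real"
  assumes cont: "continuous_on {0..} g" and "h > 0"
    and diff2_le: "\<And>t s. t \<ge> 0 \<Longrightarrow> 0 < s \<Longrightarrow> s \<le> h \<Longrightarrow> \<bar>diff2 g s t\<bar> \<le> W"
  obtains G G1 G2 where "\<And>u. (G has_real_derivative G1 u) (at u)"
    and "\<And>u. (G1 has_real_derivative G2 u) (at u)"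
    and "\<And>u. u \<ge> 0 \<Longrightarrow> \<bar>G2 u\<bar> \<le> 9 * W / h\<^sup>2"
    and "\<And>t. t \<ge> 0 \<Longrightarrow> \<bar>g t - G t\<bar> \<le> 3 * W"
proof -
  define f where "f t = g (max t 0)" for t
  have "continuous_on UNIV f"
    unfolding f_def by (rule continuous_on_compose2[OF cont]) (auto intro: continuous_intros)
  then obtain Phi where Phi: "\<And>u. (Phi has_real_derivative f u) (at u)"
    using continuous_on_UNIV_antiderivative by blast
  have "continuous_on UNIV Phi"
    by (auto simp: continuous_on_eq_continuous_at intro: DERIV_isCont[OF Phi])
  then obtain Psi where Psi: "\<And>u. (Psi has_real_derivative Phi u) (at u)"
    using continuous_on_UNIV_antiderivative by blast
  have f_diff2: "diff2 f s t = diff2 g s t" if "t \<ge> 0" "s \<ge> 0" for s t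
    using that by (simp add: diff2_def f_def)
  show ?thesis
  proof (rule that[OF steklov2_has_derivative[OF Psi] steklov2_has_derivative[OF Phi]])
    show "\<bar>steklov2 f (h / 2) u\<bar> \<le> 9 * W / h\<^sup>2" if "u \<ge> 0" for u
      using abs_steklov2_le[of f "h / 2" u W] diff2_le[of u "h / 2"] diff2_le[of u h] f_diff2 that \<open>h > 0\<close>
      by (simp add: power2_eq_square)
    show "\<bar>g t - steklov2 Psi (h / 2) t\<bar> \<le> 3 * W" if "t \<ge> 0" for t
    proof -
      have "\<bar>f t - steklov2 Psi (h / 2) t\<bar> \<le> 3 * W"
        using diff2_le[of t] f_diff2 that \<open>h > 0\<close> by (intro steklov2_approx[OF Psi Phi]) auto
      thus ?thesis using that by (simp add: f_def)
    qed
  qed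
qed

lemma smoothing_linear_approx:
  fixes g :: "real \<Rightarrow> real"
  assumes cont: "continuous_on {0..} g" and "h > 0" and x: "x \<ge> 0"
    and diff2_le: "\<And>t s. t \<ge> 0 \<Longrightarrow> 0 < s \<Longrightarrow> s \<le> h \<Longrightarrow> \<bar>diff2 g s t\<bar> \<le> W"
    and g_le: "\<And>u. u \<ge> 0 \<Longrightarrow> \<bar>g u\<bar> \<le> S" and K: "K = 9 * W / h\<^sup>2"
  obtains d where "\<And>u. u \<ge> 0 \<Longrightarrow> \<bar>g u - g x - d * (u - x)\<bar> \<le> 6 * W + K / 2 * (u - x)\<^sup>2"
    and "\<bar>d\<bar> \<le> 2 * S + 6 * W + K / 2"
proof -
  obtain G G1 G2 where G: "\<And>u. (G has_real_derivative G1 u) (at u)"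
    and G1: "\<And>u. (G1 has_real_derivative G2 u) (at u)"
    and G2: "\<And>u. u \<ge> 0 \<Longrightarrow> \<bar>G2 u\<bar> \<le> K"
    and approx: "\<And>u. u \<ge> 0 \<Longrightarrow> \<bar>g u - G u\<bar> \<le> 3 * W"
    using second_order_smoothing[OF cont \<open>h > 0\<close> diff2_le] unfolding K by blast
  have taylor: "\<bar>G u - G x - G1 x * (u - x)\<bar> \<le> K / 2 * (u - x)\<^sup>2" if "u \<ge> 0" for u
    using taylor2_remainder_bound[of 0 "max x u" G G1 G2 K x u] G G1 G2 x that by auto
  show thesis
  proof (rule that(1))
    show "\<bar>g u - g x - G1 x * (u - x)\<bar> \<le> 6 * W + K / 2 * (u - x)\<^sup>2" if "u \<ge> 0" for u
      using approx[OF that] approx[OF x] taylor[OF that] unfolding abs_le_iff by linarith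
    have x1: "x + 1 \<ge> 0" using x by simp
    have "\<bar>G (x + 1) - G x - G1 x\<bar> \<le> K / 2" using taylor[OF x1] by simp
    thus "\<bar>G1 x\<bar> \<le> 2 * S + 6 * W + K / 2"
      using approx[OF x] approx[OF x1] g_le[OF x] g_le[OF x1] unfolding abs_le_iff by linarith
  qed
qed

section \<open>Positive weighted means\<close>

context
  fixes w :: "'a \<Rightarrow> real" and N :: real
  assumes weight_nonneg: "\<And>p. w p \<ge> 0" and weight_sum: "(w has_sum N) UNIV" and N_pos: "N > 0"
begin

lemma weighted_mean_eq_if_variance_0:
  assumes var: "((\<lambda>p. w p * (t p - x)\<^sup>2) has_sum 0) UNIV"
    and T: "((\<lambda>p. w p * g (t p)) has_sum N * T) UNIV"
  shows "T = g x"
proof -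
  have "w p * (t p - x)\<^sup>2 = 0" for p
    using var weight_nonneg by (intro nonneg_has_sum_le_0D) auto
  hence "(\<lambda>p. w p * g (t p)) = (\<lambda>p. g x * w p)"
    by (auto simp: fun_eq_iff)
  hence "((\<lambda>p. g x * w p) has_sum N * T) UNIV" using T by simp
  with has_sum_cmult_right[OF weight_sum, of "g x"] have "N * T = g x * N"
    using has_sum_unique by blast
  thus ?thesis using N_pos by simp
qed

lemma weighted_mean_dev_le:
  assumes D1: "((\<lambda>p. w p * (t p - x)) has_sum N * D1) UNIV"
    and D2: "((\<lambda>p. w p * (t p - x)\<^sup>2) has_sum N * D2) UNIV"
    and T: "((\<lambda>p. w p * g (t p)) has_sum N * T) UNIV"
    and pointwise: "\<And>p. \<bar>g (t p) - g x - d * (t p - x)\<bar> \<le> c + K * (t p - x)\<^sup>2"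
  shows "\<bar>T - g x - d * D1\<bar> \<le> c + K * D2"
proof -
  have "((\<lambda>p. w p * g (t p) + (- g x) * w p + (- d) * (w p * (t p - x))) has_sum
        (N * T + (- g x) * N + (- d) * (N * D1))) UNIV"
    by (intro has_sum_add has_sum_cmult_right T weight_sum D1)
  moreover have "((\<lambda>p. c * w p + K * (w p * (t p - x)\<^sup>2)) has_sum (c * N + K * (N * D2))) UNIV"
    by (intro has_sum_add has_sum_cmult_right weight_sum D2)
  moreover have "norm (w p * g (t p) + (- g x) * w p + (- d) * (w p * (t p - x)))
      \<le> c * w p + K * (w p * (t p - x)\<^sup>2)" for p
  proof -
    have "w p * g (t p) + (- g x) * w p + (- d) * (w p * (t p - x))
        = w p * (g (t p) - g x - d * (t p - x))"
      by (simp add: algebra_simps)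
    hence "norm (w p * g (t p) + (- g x) * w p + (- d) * (w p * (t p - x)))
        = w p * \<bar>g (t p) - g x - d * (t p - x)\<bar>"
      by (simp add: abs_mult weight_nonneg)
    also have "\<dots> \<le> w p * (c + K * (t p - x)\<^sup>2)"
      by (rule mult_left_mono[OF pointwise weight_nonneg])
    finally show ?thesis by (simp add: algebra_simps)
  qed
  ultimately have "norm (N * T + (- g x) * N + (- d) * (N * D1)) \<le> c * N + K * (N * D2)"
    by (rule norm_infsum_le)
  hence "\<bar>N * (T - g x - d * D1)\<bar> \<le> N * (c + K * D2)"
    by (simp add: algebra_simps)
  hence "N * \<bar>T - g x - d * D1\<bar> \<le> N * (c + K * D2)"
    using N_pos by (simp add: abs_mult)
  thus ?thesis using N_pos by simp
qed

lemma weighted_mean_approx_via_smoothing: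
  fixes g :: "real \<Rightarrow> real"
  assumes cont: "continuous_on {0..} g" and bounded: "bounded (g ` {0..})"
    and x: "x \<ge> 0" and nodes: "\<And>p. t p \<ge> 0"
    and D1: "((\<lambda>p. w p * (t p - x)) has_sum N * D1) UNIV"
    and D2: "((\<lambda>p. w p * (t p - x)\<^sup>2) has_sum N * D2) UNIV"
    and T: "((\<lambda>p. w p * g (t p)) has_sum N * T) UNIV"
    and \<delta>: "0 < \<delta>" "\<delta> \<le> 1" and D1_bounds: "0 \<le> D1" "D1 \<le> 2 * \<delta>" and D2_le: "D2 \<le> 2 * \<delta>"
  shows "\<bar>T - g x\<bar> \<le> 4 * \<delta> * supnorm g + 36 * omega2 g (sqrt \<delta>)"
proof -
  define S W K where "S = supnorm g" and "W = omega2 g (sqrt \<delta>)" and "K = 9 * W / \<delta>"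
  have "sqrt \<delta> > 0" "(sqrt \<delta>)\<^sup>2 = \<delta>" using \<delta> by auto
  have "W \<ge> 0" "K \<ge> 0" using omega2_nonneg[OF bounded] \<delta> by (auto simp: W_def K_def)
  have diff2_le: "\<bar>diff2 g s u\<bar> \<le> W" if "u \<ge> 0" "0 < s" "s \<le> sqrt \<delta>" for s u
    using abs_diff2_le_omega2[OF bounded that] by (simp add: W_def)
  have g_le: "\<bar>g u\<bar> \<le> S" if "u \<ge> 0" for u
    using supnorm_ge[OF bounded that] by (simp add: S_def)
  have "K = 9 * W / (sqrt \<delta>)\<^sup>2" using \<open>(sqrt \<delta>)\<^sup>2 = \<delta>\<close> by (simp add: K_def)
  from smoothing_linear_approx[OF cont \<open>sqrt \<delta> > 0\<close> x diff2_le g_le this]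
  obtain d where linear: "\<And>u. u \<ge> 0 \<Longrightarrow> \<bar>g u - g x - d * (u - x)\<bar> \<le> 6 * W + K / 2 * (u - x)\<^sup>2"
    and d: "\<bar>d\<bar> \<le> 2 * S + 6 * W + K / 2" by blast
  have "\<bar>T - g x - d * D1\<bar> \<le> 6 * W + K / 2 * D2"
    using linear[OF nodes] by (rule weighted_mean_dev_le[OF D1 D2 T])
  moreover have "K / 2 * D2 \<le> 9 * W"
    using mult_left_mono[OF D2_le, of "K / 2"] \<open>K \<ge> 0\<close> \<delta> by (simp add: K_def)
  moreover have "\<bar>d\<bar> * D1 \<le> (2 * S + 6 * W + K / 2) * (2 * \<delta>)"
    using d D1_bounds by (intro mult_mono) auto
  moreover have "(2 * S + 6 * W + K / 2) * (2 * \<delta>) = 4 * \<delta> * S + 12 * (\<delta> * W) + 9 * W"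
    using \<delta> by (simp add: K_def field_simps)
  moreover have "\<delta> * W \<le> W" using \<delta> \<open>W \<ge> 0\<close> by (intro mult_left_le_one_le) auto
  moreover have "\<bar>T - g x\<bar> \<le> \<bar>T - g x - d * D1\<bar> + \<bar>d\<bar> * D1"
    using abs_triangle_ineq[of "T - g x - d * D1" "d * D1"] D1_bounds by (simp add: abs_mult)
  ultimately have "\<bar>T - g x\<bar> \<le> 4 * \<delta> * S + 36 * W" by linarith
  thus ?thesis by (simp add: S_def W_def)
qed

lemma weighted_mean_approx:
  fixes g :: "real \<Rightarrow> real"
  assumes cont: "continuous_on {0..} g" and bounded: "bounded (g ` {0..})"
    and x: "x \<ge> 0" and nodes: "\<And>p. t p \<ge> 0"
    and D1: "((\<lambda>p. w p * (t p - x)) has_sum N * D1) UNIV"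
    and D2: "((\<lambda>p. w p * (t p - x)\<^sup>2) has_sum N * D2) UNIV"
    and T: "((\<lambda>p. w p * g (t p)) has_sum N * T) UNIV"
    and "D1 \<ge> 0"
  shows "\<bar>T - g x\<bar> \<le> 36 * (min 1 ((D1 + D2) / 2) * supnorm g + omega2 g (sqrt ((D1 + D2) / 2)))"
proof -
  define \<delta> where "\<delta> = (D1 + D2) / 2"
  have "N * D2 \<ge> 0" by (rule has_sum_nonneg[OF D2]) (simp add: weight_nonneg)
  hence "D2 \<ge> 0" using N_pos by (simp add: zero_le_mult_iff)
  have S: "supnorm g \<ge> 0" by (rule supnorm_nonneg[OF bounded])
  have W: "omega2 g (sqrt \<delta>) \<ge> 0" by (rule omega2_nonneg[OF bounded])
  have "\<delta> \<ge> 0" using \<open>D1 \<ge> 0\<close> \<open>D2 \<ge> 0\<close> by (simp add: \<delta>_def)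
  then consider "\<delta> = 0" | "\<delta> > 1" | "0 < \<delta>" "\<delta> \<le> 1" by linarith
  hence "\<bar>T - g x\<bar> \<le> 36 * (min 1 \<delta> * supnorm g + omega2 g (sqrt \<delta>))"
  proof cases
    case 1
    hence "D2 = 0" using \<open>D1 \<ge> 0\<close> \<open>D2 \<ge> 0\<close> by (simp add: \<delta>_def)
    hence "((\<lambda>p. w p * (t p - x)\<^sup>2) has_sum 0) UNIV" using D2 by simp
    from weighted_mean_eq_if_variance_0[OF this T] have "T = g x" .
    thus ?thesis using S W 1 by simp
  next
    case 2
    have "\<bar>T - g x - 0 * D1\<bar> \<le> 2 * supnorm g + 0 * D2"
    proof (rule weighted_mean_dev_le[OF D1 D2 T])
      show "\<bar>g (t p) - g x - 0 * (t p - x)\<bar> \<le> 2 * supnorm g + 0 * (t p - x)\<^sup>2" for p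
        using abs_triangle_ineq4[of "g (t p)" "g x"] supnorm_ge[OF bounded nodes[of p]]
          supnorm_ge[OF bounded x] by simp
    qed
    thus ?thesis using 2 S W by simp
  next
    case 3
    have "\<bar>T - g x\<bar> \<le> 4 * \<delta> * supnorm g + 36 * omega2 g (sqrt \<delta>)"
      using 3 \<open>D1 \<ge> 0\<close> \<open>D2 \<ge> 0\<close> unfolding \<delta>_def
      by (intro weighted_mean_approx_via_smoothing[OF cont bounded x nodes D1 D2 T]) simp_all
    moreover have "\<delta> * supnorm g \<ge> 0" using 3 S by simp
    ultimately have "\<bar>T - g x\<bar> \<le> 36 * (\<delta> * supnorm g + omega2 g (sqrt \<delta>))"
      by (simp add: algebra_simps)
    thus ?thesis using 3 by (simp add: min_def)
  qed
  thus ?thesis by (simp add: \<delta>_def)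
qed

end

theorem theorem9:
  fixes \<alpha> \<mu> :: real
  assumes "\<alpha> \<ge> 0" and "\<mu> \<ge> 0"
  shows "\<exists>M>0. \<forall>g n x.
           uniformly_continuous_on {0..} g \<longrightarrow> bounded (g ` {0..}) \<longrightarrow>
           n \<ge> 1 \<longrightarrow> x \<ge> 0 \<longrightarrow>
           \<bar>T_op \<alpha> \<mu> n g x - g x\<bar>
             \<le> 2 * M * (min 1 (chi \<alpha> \<mu> n x / 2) * supnorm g
                         + omega2 g (sqrt (chi \<alpha> \<mu> n x / 2)))"
proof (intro exI[of _ 18] conjI allI impI)
  fix g :: "real \<Rightarrow> real" and n :: nat and x :: real
  assume uc: "uniformly_continuous_on {0..} g" and bounded: "bounded (g ` {0..})"
    and n: "n \<ge> 1" and x: "x \<ge> 0"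
  note \<alpha> = assms(1) and \<mu> = assms(2)
  have y: "\<alpha> * x\<^sup>2 \<ge> 0" and z: "real n * x \<ge> 0" using \<alpha> x by auto
  have "exp (\<alpha> * x\<^sup>2) * e_mu \<mu> (real n * x) > 0"
    using e_mu_ge_1[OF \<mu> z] by (intro mult_pos_pos) auto
  from weighted_mean_approx[OF T_weight_nonneg[OF \<mu> y z] T_weight_has_sum[OF \<mu> y z] this
      uniformly_continuous_imp_continuous[OF uc] bounded x T_node_nonneg[OF \<mu>]
      T_central_moments[OF \<mu> \<alpha> x n] T_op_has_sum_pairs[OF \<mu> \<alpha> x supnorm_ge[OF bounded]]]
  show "\<bar>T_op \<alpha> \<mu> n g x - g x\<bar>
      \<le> 2 * 18 * (min 1 (chi \<alpha> \<mu> n x / 2) * supnorm g + omega2 g (sqrt (chi \<alpha> \<mu> n x / 2)))"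
    using \<alpha> x by simp
qed simp

end
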